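(* Let $\kappa$ be a cardinal, let $\mathcal{C},\mathcal{D}$ be categories that have products indexed by sets of cardinality $\kappa$, and let $F:\mathcal{C}\to\mathcal{D}$ be a functor. Assume that $|\mathcal{D}(F(c'),F(c))|\leq\kappa$ for any two objects $c',c$ of $\mathcal{C}$. Then: (1) for any two parallel morphisms $f,g:c'\to c$ in $\mathcal{C}$ we have $F(f)=F(g)$; (2) if $\mathcal{C}$ is strongly connected, then $F$ is isomorphic to a constant functor.
   Context: A category is strongly connected if for any two objects $c,c'$ the hom-set $\mathcal{C}(c,c')$ is non-empty. *)

theory Defs
  imports Main "HOL-Library.Equipollence"
begin

text \<open>A (possibly large) category, presented by a set of objects, hom-sets,
  composition (Comp g f means g after f) and identities.\<close>
record ('o, 'm) category =
  Obj  :: "'o set"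
  Hom  :: "'o \<Rightarrow> 'o \<Rightarrow> 'm set"
  Comp :: "'m \<Rightarrow> 'm \<Rightarrow> 'm"
  Ide  :: "'o \<Rightarrow> 'm"

definition is_category :: "('o, 'm) category \<Rightarrow> bool" where
  "is_category C \<longleftrightarrow>
     (\<forall>a\<in>Obj C. Ide C a \<in> Hom C a a) \<and>
     (\<forall>a\<in>Obj C. \<forall>b\<in>Obj C. \<forall>c\<in>Obj C. \<forall>f\<in>Hom C a b. \<forall>g\<in>Hom C b c.
        Comp C g f \<in> Hom C a c) \<and>
     (\<forall>a\<in>Obj C. \<forall>b\<in>Obj C. \<forall>c\<in>Obj C. \<forall>d\<in>Obj C.
        \<forall>f\<in>Hom C a b. \<forall>g\<in>Hom C b c. \<forall>h\<in>Hom C c d.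
        Comp C h (Comp C g f) = Comp C (Comp C h g) f) \<and>
     (\<forall>a\<in>Obj C. \<forall>b\<in>Obj C. \<forall>f\<in>Hom C a b.
        Comp C (Ide C b) f = f \<and> Comp C f (Ide C a) = f)"

definition is_functor ::
  "('o1, 'm1) category \<Rightarrow> ('o2, 'm2) category \<Rightarrow> ('o1 \<Rightarrow> 'o2) \<Rightarrow> ('m1 \<Rightarrow> 'm2) \<Rightarrow> bool" where
  "is_functor C D Fo Fm \<longleftrightarrow>
     (\<forall>a\<in>Obj C. Fo a \<in> Obj D) \<and>
     (\<forall>a\<in>Obj C. \<forall>b\<in>Obj C. \<forall>f\<in>Hom C a b. Fm f \<in> Hom D (Fo a) (Fo b)) \<and>
     (\<forall>a\<in>Obj C. \<forall>b\<in>Obj C. \<forall>c\<in>Obj C. \<forall>f\<in>Hom C a b. \<forall>g\<in>Hom C b c.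
        Fm (Comp C g f) = Comp D (Fm g) (Fm f)) \<and>
     (\<forall>a\<in>Obj C. Fm (Ide C a) = Ide D (Fo a))"

definition is_iso :: "('o, 'm) category \<Rightarrow> 'o \<Rightarrow> 'o \<Rightarrow> 'm \<Rightarrow> bool" where
  "is_iso C a b f \<longleftrightarrow> f \<in> Hom C a b \<and>
     (\<exists>g\<in>Hom C b a. Comp C g f = Ide C a \<and> Comp C f g = Ide C b)"

definition is_nat_iso ::
  "('o1, 'm1) category \<Rightarrow> ('o2, 'm2) category \<Rightarrow> ('o1 \<Rightarrow> 'o2) \<Rightarrow> ('m1 \<Rightarrow> 'm2)
     \<Rightarrow> ('o1 \<Rightarrow> 'o2) \<Rightarrow> ('m1 \<Rightarrow> 'm2) \<Rightarrow> ('o1 \<Rightarrow> 'm2) \<Rightarrow> bool" where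
  "is_nat_iso C D Fo Fm Go Gm \<eta> \<longleftrightarrow>
     (\<forall>a\<in>Obj C. is_iso D (Fo a) (Go a) (\<eta> a)) \<and>
     (\<forall>a\<in>Obj C. \<forall>b\<in>Obj C. \<forall>f\<in>Hom C a b.
        Comp D (\<eta> b) (Fm f) = Comp D (Gm f) (\<eta> a))"

definition functors_iso ::
  "('o1, 'm1) category \<Rightarrow> ('o2, 'm2) category \<Rightarrow> ('o1 \<Rightarrow> 'o2) \<Rightarrow> ('m1 \<Rightarrow> 'm2)
     \<Rightarrow> ('o1 \<Rightarrow> 'o2) \<Rightarrow> ('m1 \<Rightarrow> 'm2) \<Rightarrow> bool" where
  "functors_iso C D Fo Fm Go Gm \<longleftrightarrow> (\<exists>\<eta>. is_nat_iso C D Fo Fm Go Gm \<eta>)"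

definition iso_to_constant_functor ::
  "('o1, 'm1) category \<Rightarrow> ('o2, 'm2) category \<Rightarrow> ('o1 \<Rightarrow> 'o2) \<Rightarrow> ('m1 \<Rightarrow> 'm2) \<Rightarrow> bool" where
  "iso_to_constant_functor C D Fo Fm \<longleftrightarrow>
     (\<exists>d\<in>Obj D. functors_iso C D Fo Fm (\<lambda>_. d) (\<lambda>_. Ide D d))"

text \<open>C has all products indexed by the set K (hence by any set equipotent to K).\<close>
definition has_products :: "('o, 'm) category \<Rightarrow> 'k set \<Rightarrow> bool" where
  "has_products C K \<longleftrightarrow>
     (\<forall>X. (\<forall>i\<in>K. X i \<in> Obj C) \<longrightarrow>
        (\<exists>P\<in>Obj C. \<exists>\<pi>. (\<forall>i\<in>K. \<pi> i \<in> Hom C P (X i)) \<and>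
           (\<forall>Y\<in>Obj C. \<forall>fs. (\<forall>i\<in>K. fs i \<in> Hom C Y (X i)) \<longrightarrow>
              (\<exists>!u. u \<in> Hom C Y P \<and> (\<forall>i\<in>K. Comp C (\<pi> i) u = fs i)))))"

text \<open>Strongly connected: all hom-sets non-empty (and, as for connected
  categories, the category is non-empty).\<close>
definition strongly_connected :: "('o, 'm) category \<Rightarrow> bool" where
  "strongly_connected C \<longleftrightarrow> Obj C \<noteq> {} \<and>
     (\<forall>a\<in>Obj C. \<forall>b\<in>Obj C. Hom C a b \<noteq> {})"

end

theory Submission
  imports Defs
begin

text \<open>Suppose F f \<noteq> F g for parallel arrows f, g : a \<rightarrow> b. Every subset S of K
  gives an arrow from a to the power b^K whose i-th component is f for i \<in> S and g
  otherwise. Applying F and composing with the F-images of the projections recovers S,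
  so Pow K injects into D(F a, F (b^K)), contradicting Cantor's theorem since that
  hom-set has at most |K| elements. Once F identifies parallel arrows, in a strongly
  connected category the F-images of any arrow a \<rightarrow> c and of any arrow back compose
  to identities; taking these images as components gives a natural isomorphism from F
  to the constant functor at F c.\<close>

lemma
  assumes "is_category C"
  shows category_Ide: "a \<in> Obj C \<Longrightarrow> Ide C a \<in> Hom C a a"
    and category_Comp:
      "\<lbrakk>a \<in> Obj C; b \<in> Obj C; c \<in> Obj C; f \<in> Hom C a b; g \<in> Hom C b c\<rbrakk>
        \<Longrightarrow> Comp C g f \<in> Hom C a c"
    and category_Ide_left: "\<lbrakk>a \<in> Obj C; b \<in> Obj C; f \<in> Hom C a b\<rbrakk> \<Longrightarrow> Comp C (Ide C b) f = f"
  using assms unfolding is_category_def by blast+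

lemma
  assumes "is_functor C D Fo Fm"
  shows functor_Obj: "a \<in> Obj C \<Longrightarrow> Fo a \<in> Obj D"
    and functor_Hom: "\<lbrakk>a \<in> Obj C; b \<in> Obj C; f \<in> Hom C a b\<rbrakk> \<Longrightarrow> Fm f \<in> Hom D (Fo a) (Fo b)"
    and functor_Comp:
      "\<lbrakk>a \<in> Obj C; b \<in> Obj C; c \<in> Obj C; f \<in> Hom C a b; g \<in> Hom C b c\<rbrakk>
        \<Longrightarrow> Fm (Comp C g f) = Comp D (Fm g) (Fm f)"
    and functor_Ide: "a \<in> Obj C \<Longrightarrow> Fm (Ide C a) = Ide D (Fo a)"
  using assms unfolding is_functor_def by blast+

lemma has_products_powerE:
  assumes "has_products C K" and "b \<in> Obj C"
  obtains P \<pi> where "P \<in> Obj C" and "\<And>i. i \<in> K \<Longrightarrow> \<pi> i \<in> Hom C P b"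
    and "\<And>Y fs. \<lbrakk>Y \<in> Obj C; \<And>i. i \<in> K \<Longrightarrow> fs i \<in> Hom C Y b\<rbrakk>
           \<Longrightarrow> \<exists>u \<in> Hom C Y P. \<forall>i\<in>K. Comp C (\<pi> i) u = fs i"
proof -
  from assms obtain P \<pi> where "P \<in> Obj C" "\<forall>i\<in>K. \<pi> i \<in> Hom C P b"
    and "\<forall>Y\<in>Obj C. \<forall>fs. (\<forall>i\<in>K. fs i \<in> Hom C Y b) \<longrightarrow>
           (\<exists>!u. u \<in> Hom C Y P \<and> (\<forall>i\<in>K. Comp C (\<pi> i) u = fs i))"
    unfolding has_products_def by (elim allE[where x = "\<lambda>_. b"]) auto
  then show thesis
    by (intro that[of P \<pi>]) blast+
qed

lemma Pow_lepoll_Hom_if_separated: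
  fixes K :: "'k set"
  assumes F: "is_functor C D Fo Fm" and products: "has_products C K"
    and a: "a \<in> Obj C" and b: "b \<in> Obj C"
    and f: "f \<in> Hom C a b" and g: "g \<in> Hom C a b" and separated: "Fm f \<noteq> Fm g"
  obtains P where "P \<in> Obj C" and "Pow K \<lesssim> Hom D (Fo a) (Fo P)"
proof -
  obtain P \<pi> where P: "P \<in> Obj C" and \<pi>: "\<And>i. i \<in> K \<Longrightarrow> \<pi> i \<in> Hom C P b"
    and tuple: "\<And>Y fs. \<lbrakk>Y \<in> Obj C; \<And>i. i \<in> K \<Longrightarrow> fs i \<in> Hom C Y b\<rbrakk>
                  \<Longrightarrow> \<exists>u \<in> Hom C Y P. \<forall>i\<in>K. Comp C (\<pi> i) u = fs i"
    using has_products_powerE[OF products b] by blast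
  define select where "select S i = (if i \<in> S then f else g)" for S :: "'k set" and i
  have "\<exists>u \<in> Hom C a P. \<forall>i\<in>K. Comp C (\<pi> i) u = select S i" for S
    by (rule tuple[OF a]) (simp add: select_def f g)
  then have "\<forall>S. \<exists>u. u \<in> Hom C a P \<and> (\<forall>i\<in>K. Comp C (\<pi> i) u = select S i)"
    by blast
  from choice[OF this] obtain u
    where "\<forall>S. u S \<in> Hom C a P \<and> (\<forall>i\<in>K. Comp C (\<pi> i) (u S) = select S i)"
    by blast
  then have u: "\<And>S. u S \<in> Hom C a P"
    and u_select: "\<And>S i. i \<in> K \<Longrightarrow> Comp C (\<pi> i) (u S) = select S i"
    by blast+
  have F_u_select: "Comp D (Fm (\<pi> i)) (Fm (u S)) = Fm (select S i)" if "i \<in> K" for S i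
    using functor_Comp[OF F a P b u \<pi>[OF that]] u_select[OF that] by simp
  have "inj_on (\<lambda>S. Fm (u S)) (Pow K)"
  proof (rule inj_onI)
    fix S T assume "S \<in> Pow K" "T \<in> Pow K" and "Fm (u S) = Fm (u T)"
    then have "i \<in> S \<longleftrightarrow> i \<in> T" if "i \<in> K" for i
      using F_u_select[OF that, of S] F_u_select[OF that, of T] separated
      unfolding select_def by (auto split: if_splits)
    with \<open>S \<in> Pow K\<close> \<open>T \<in> Pow K\<close> show "S = T" by blast
  qed
  moreover have "(\<lambda>S. Fm (u S)) ` Pow K \<subseteq> Hom D (Fo a) (Fo P)"
    using functor_Hom[OF F a P u] by blast
  ultimately have "Pow K \<lesssim> Hom D (Fo a) (Fo P)"
    unfolding lepoll_def by blast
  with P show thesis by (rule that)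
qed

lemma functor_identifies_parallel_if_small_Hom:
  assumes F: "is_functor C D Fo Fm" and products: "has_products C K"
    and small: "\<forall>a\<in>Obj C. \<forall>b\<in>Obj C. Hom D (Fo a) (Fo b) \<lesssim> K"
    and "a \<in> Obj C" "b \<in> Obj C" "f \<in> Hom C a b" "g \<in> Hom C a b"
  shows "Fm f = Fm g"
proof (rule ccontr)
  assume "Fm f \<noteq> Fm g"
  then obtain P where "P \<in> Obj C" and Pow_lepoll: "Pow K \<lesssim> Hom D (Fo a) (Fo P)"
    using Pow_lepoll_Hom_if_separated[OF F products] assms(4-7) by metis
  have "K \<prec> Pow K" by (rule lesspoll_Pow_self)
  also note Pow_lepoll
  also have "Hom D (Fo a) (Fo P) \<lesssim> K"
    using small \<open>a \<in> Obj C\<close> \<open>P \<in> Obj C\<close> by blast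
  finally show False by simp
qed

lemma is_iso_image_if_identifies_parallel:
  assumes C: "is_category C" and F: "is_functor C D Fo Fm"
    and thin: "\<forall>a\<in>Obj C. \<forall>b\<in>Obj C. \<forall>f\<in>Hom C a b. \<forall>g\<in>Hom C a b. Fm f = Fm g"
    and a: "a \<in> Obj C" and b: "b \<in> Obj C"
    and f: "f \<in> Hom C a b" and g: "g \<in> Hom C b a"
  shows "is_iso D (Fo a) (Fo b) (Fm f)"
proof -
  have "Comp D (Fm g) (Fm f) = Fm (Comp C g f)"
    using functor_Comp[OF F a b a f g] by simp
  also have "\<dots> = Fm (Ide C a)"
    using thin category_Comp[OF C a b a f g] category_Ide[OF C a] a by blast
  finally have left_inverse: "Comp D (Fm g) (Fm f) = Ide D (Fo a)"
    using functor_Ide[OF F a] by simp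
  have "Comp D (Fm f) (Fm g) = Fm (Comp C f g)"
    using functor_Comp[OF F b a b g f] by simp
  also have "\<dots> = Fm (Ide C b)"
    using thin category_Comp[OF C b a b g f] category_Ide[OF C b] b by blast
  finally have right_inverse: "Comp D (Fm f) (Fm g) = Ide D (Fo b)"
    using functor_Ide[OF F b] by simp
  show ?thesis
    unfolding is_iso_def
    using functor_Hom[OF F a b f] functor_Hom[OF F b a g] left_inverse right_inverse by blast
qed

lemma iso_to_constant_functor_if_identifies_parallel:
  assumes C: "is_category C" and D: "is_category D" and F: "is_functor C D Fo Fm"
    and connected: "strongly_connected C"
    and thin: "\<forall>a\<in>Obj C. \<forall>b\<in>Obj C. \<forall>f\<in>Hom C a b. \<forall>g\<in>Hom C a b. Fm f = Fm g"
  shows "iso_to_constant_functor C D Fo Fm"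
proof -
  obtain c where c: "c \<in> Obj C"
    using connected unfolding strongly_connected_def by blast
  have Hom_nonempty: "\<And>a b. \<lbrakk>a \<in> Obj C; b \<in> Obj C\<rbrakk> \<Longrightarrow> \<exists>f. f \<in> Hom C a b"
    using connected unfolding strongly_connected_def by blast
  then have "\<forall>a\<in>Obj C. \<exists>f. f \<in> Hom C a c"
    using c by blast
  from bchoice[OF this] obtain t where t: "\<And>a. a \<in> Obj C \<Longrightarrow> t a \<in> Hom C a c"
    by blast
  have "is_nat_iso C D Fo Fm (\<lambda>_. Fo c) (\<lambda>_. Ide D (Fo c)) (\<lambda>a. Fm (t a))"
    unfolding is_nat_iso_def
  proof (intro conjI ballI)
    fix a assume a: "a \<in> Obj C"
    obtain s where "s \<in> Hom C c a" using Hom_nonempty[OF c a] by blast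
    then show "is_iso D (Fo a) (Fo c) (Fm (t a))"
      using is_iso_image_if_identifies_parallel[OF C F thin a c t[OF a]] by blast
  next
    fix a b f assume a: "a \<in> Obj C" and b: "b \<in> Obj C" and f: "f \<in> Hom C a b"
    have "Comp D (Fm (t b)) (Fm f) = Fm (Comp C (t b) f)"
      using functor_Comp[OF F a b c f t[OF b]] by simp
    also have "\<dots> = Fm (t a)"
      using thin category_Comp[OF C a b c f t[OF b]] t[OF a] a c by blast
    also have "\<dots> = Comp D (Ide D (Fo c)) (Fm (t a))"
      using category_Ide_left[OF D functor_Obj[OF F a] functor_Obj[OF F c]]
        functor_Hom[OF F a c t[OF a]] by simp
    finally show "Comp D (Fm (t b)) (Fm f) = Comp D (Ide D (Fo c)) (Fm (t a))" .
  qed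
  then show ?thesis
    unfolding iso_to_constant_functor_def functors_iso_def
    using functor_Obj[OF F c] by blast
qed

theorem proposition2p2:
  fixes K :: "'k set"
    and C :: "('o1, 'm1) category" and D :: "('o2, 'm2) category"
    and Fo :: "'o1 \<Rightarrow> 'o2" and Fm :: "'m1 \<Rightarrow> 'm2"
  assumes "is_category C" and "is_category D"
    and "has_products C K" and "has_products D K"
    and "is_functor C D Fo Fm"
    and "\<forall>a\<in>Obj C. \<forall>b\<in>Obj C. Hom D (Fo a) (Fo b) \<lesssim> K"
  shows "(\<forall>a\<in>Obj C. \<forall>b\<in>Obj C. \<forall>f\<in>Hom C a b. \<forall>g\<in>Hom C a b. Fm f = Fm g)
       \<and> (strongly_connected C \<longrightarrow> iso_to_constant_functor C D Fo Fm)"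
proof -
  have thin: "\<forall>a\<in>Obj C. \<forall>b\<in>Obj C. \<forall>f\<in>Hom C a b. \<forall>g\<in>Hom C a b. Fm f = Fm g"
    using functor_identifies_parallel_if_small_Hom[OF assms(5,3,6)] by blast
  moreover have "strongly_connected C \<longrightarrow> iso_to_constant_functor C D Fo Fm"
    using iso_to_constant_functor_if_identifies_parallel[OF assms(1,2,5) _ thin] by blast
  ultimately show ?thesis ..
qed

end
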